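(* Let $G=(V,E)$ be a finite connected graph and $\mathbf{p}\in\mathbb{R}^V$ with $\sum_{v\in V}\mathbf{p}_v=0$. Let $\mathcal{G}=(\mathcal V,\mathcal E)$ be a connected component of the graph $\mathfrak G$, with $\mathcal V=\mathcal V_1\sqcup\mathcal V_2$, $\mathcal V_i=\mathcal V\cap\mathfrak V_i$, and suppose $\mathcal G$ contains no special vertex. Then $$\sum_{\mathfrak u\in\mathcal V_1}q(\mathfrak u)=\sum_{\mathfrak w\in\mathcal V_2}q(\mathfrak w).$$
   Context: Spanning trees and spanning 2-forests (acyclic spanning subgraphs with exactly two connected components) of $G$ form sets $\mathcal{ST}$, $\mathcal{SF}_2$; $F+e$ (resp. $T-e$) denotes the spanning subgraph obtained by adding (resp. removing) the edge $e$. For $F\in\mathcal{SF}_2$, $\mathcal{P}(F)=\{X,X'\}$ is the partition of $V$ into the vertex sets of its two components, $F\sim_v F'$ iff $\mathcal{P}(F)=\mathcal{P}(F')$, and $q(F)=(\sum_{v\in X}\mathbf{p}_v)^2$ (independent of the choice of part since $\mathbf{p}$ sums to zero). The graph $\mathfrak G$ is bipartite with vertex set $\mathfrak V_1\sqcup\mathfrak V_2$, $\mathfrak V_1=\{(F_1,F_2,T):F_1,F_2\in\mathcal{SF}_2,T\in\mathcal{ST}\}$, $\mathfrak V_2=\{(T_1,T_2,F):T_1,T_2\in\mathcal{ST},F\in\mathcal{SF}_2\}$; $(F_1,F_2,T)$ is adjacent to $(T_1,T_2,F)$ iff there is an edge $e$ with $T=F+e$, $F_1=T_1-e$, $F_2=T_2-e$.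 A vertex $(F_1,F_2,T)\in\mathfrak V_1$ is special if $F_1\not\sim_v F_2$; a vertex $(T_1,T_2,F)\in\mathfrak V_2$ is special if there is an edge $e\in(E(T_1)\setminus E(T_2))\cup(E(T_2)\setminus E(T_1))$ with $F+e$ a spanning tree. For non-special vertices, $q(F_1,F_2,T)=q(F_1)$ $(=q(F_2))$ and $q(T_1,T_2,F)=q(F)$. *)

theory Defs
  imports Complex_Main
begin

text \<open>Finite simple graphs: a vertex set V and an edge set E of 2-element subsets of V.
  Spanning subgraphs are identified with their edge sets F (a subset of E).\<close>

definition simple_graph :: "'v set \<Rightarrow> 'v set set \<Rightarrow> bool" where
  "simple_graph V E \<longleftrightarrow> finite V \<and> (\<forall>e\<in>E. e \<subseteq> V \<and> card e = 2)"

definition adj_rel :: "'v set set \<Rightarrow> ('v \<times> 'v) set" where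
  "adj_rel F = {(x, y). {x, y} \<in> F}"

definition comp :: "'v set \<Rightarrow> 'v set set \<Rightarrow> 'v \<Rightarrow> 'v set" where
  "comp V F v = {u \<in> V. (v, u) \<in> (adj_rel F)\<^sup>*}"

definition parts :: "'v set \<Rightarrow> 'v set set \<Rightarrow> 'v set set" where
  "parts V F = comp V F ` V"

definition has_cycle :: "'v set set \<Rightarrow> bool" where
  "has_cycle F \<longleftrightarrow> (\<exists>vs. distinct vs \<and> length vs \<ge> 3 \<and>
      (\<forall>i < length vs. {vs ! i, vs ! (Suc i mod length vs)} \<in> F))"

definition spanning_tree :: "'v set \<Rightarrow> 'v set set \<Rightarrow> 'v set set \<Rightarrow> bool" where
  "spanning_tree V E T \<longleftrightarrow> T \<subseteq> E \<and> \<not> has_cycle T \<and> card (parts V T) = 1"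

definition spanning_2forest :: "'v set \<Rightarrow> 'v set set \<Rightarrow> 'v set set \<Rightarrow> bool" where
  "spanning_2forest V E F \<longleftrightarrow> F \<subseteq> E \<and> \<not> has_cycle F \<and> card (parts V F) = 2"

definition connected_graph :: "'v set \<Rightarrow> 'v set set \<Rightarrow> bool" where
  "connected_graph V E \<longleftrightarrow> card (parts V E) = 1"

definition qF :: "'v set \<Rightarrow> ('v \<Rightarrow> real) \<Rightarrow> 'v set set \<Rightarrow> real" where
  "qF V p F = (\<Sum>v\<in>(SOME X. X \<in> parts V F). p v)\<^sup>2"

text \<open>Vertices of the big graph: Inl (F1,F2,T) in V_1, Inr (T1,T2,F) in V_2.\<close>
type_synonym 'v gvert = "('v set set \<times> 'v set set \<times> 'v set set) + ('v set set \<times> 'v set set \<times> 'v set set)"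

definition GV1 :: "'v set \<Rightarrow> 'v set set \<Rightarrow> ('v set set \<times> 'v set set \<times> 'v set set) set" where
  "GV1 V E = {(F1, F2, T). spanning_2forest V E F1 \<and> spanning_2forest V E F2 \<and> spanning_tree V E T}"

definition GV2 :: "'v set \<Rightarrow> 'v set set \<Rightarrow> ('v set set \<times> 'v set set \<times> 'v set set) set" where
  "GV2 V E = {(T1, T2, F). spanning_tree V E T1 \<and> spanning_tree V E T2 \<and> spanning_2forest V E F}"

definition GVerts :: "'v set \<Rightarrow> 'v set set \<Rightarrow> 'v gvert set" where
  "GVerts V E = Inl ` GV1 V E \<union> Inr ` GV2 V E"

definition gadj12 :: "'v set set \<Rightarrow> ('v set set \<times> 'v set set \<times> 'v set set)
    \<Rightarrow> ('v set set \<times> 'v set set \<times> 'v set set) \<Rightarrow> bool" where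
  "gadj12 E u w = (case u of (F1, F2, T) \<Rightarrow> case w of (T1, T2, F) \<Rightarrow>
      (\<exists>e\<in>E. T = insert e F \<and> F1 = T1 - {e} \<and> F2 = T2 - {e}))"

definition GEdges :: "'v set \<Rightarrow> 'v set set \<Rightarrow> ('v gvert \<times> 'v gvert) set" where
  "GEdges V E = {(Inl u, Inr w) | u w. u \<in> GV1 V E \<and> w \<in> GV2 V E \<and> gadj12 E u w}
             \<union> {(Inr w, Inl u) | u w. u \<in> GV1 V E \<and> w \<in> GV2 V E \<and> gadj12 E u w}"

definition Gcomp :: "'v set \<Rightarrow> 'v set set \<Rightarrow> 'v gvert \<Rightarrow> 'v gvert set" where
  "Gcomp V E x = {y \<in> GVerts V E. (x, y) \<in> (GEdges V E)\<^sup>*}"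

definition special :: "'v set \<Rightarrow> 'v set set \<Rightarrow> 'v gvert \<Rightarrow> bool" where
  "special V E x = (case x of
      Inl (F1, F2, T) \<Rightarrow> parts V F1 \<noteq> parts V F2
    | Inr (T1, T2, F) \<Rightarrow> (\<exists>e \<in> (T1 - T2) \<union> (T2 - T1). spanning_tree V E (insert e F)))"

definition qG :: "'v set \<Rightarrow> ('v \<Rightarrow> real) \<Rightarrow> 'v gvert \<Rightarrow> real" where
  "qG V p x = (case x of Inl (F1, F2, T) \<Rightarrow> qF V p F1 | Inr (T1, T2, F) \<Rightarrow> qF V p F)"

end

theory Submission
  imports Defs "HOL-Library.Transitive_Closure_Table"
begin

text \<open>Write \<sigma>(F, a) for the p-mass of the component of F containing a. Give the edge of the
  bipartite graph joining (F1, F2, T) to (T1, T2, F) through the edge {a, b} of G the weight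
  \<sigma>(F1, a) \<sigma>(F, a); replacing a by b changes the sign of both factors. It suffices to show that
  at every non-special vertex the weights of the incident edges add up to its q-value: summing
  over the component from either side then counts every weight exactly once.

  The neighbours of a non-special (F1, F2, T) are the triples (F1 + e, F2 + e, T - e) for the
  edges e of T with F1 + e a spanning tree (F1 and F2 have the same parts); those of a
  non-special (T1, T2, F) are the (T1 - e, T2 - e, F + e) for the edges e of T1 with F + e a
  spanning tree (such e lie in T2). Either way the incident weights are \<sigma>(F, a) \<sigma>(T - e, a) for a
  2-forest F and a spanning tree T, over the edges e = {a, b} of T with F + e a spanning tree.
  Fix a part X of F. Since \<sigma>(V) = 0, the two factors are \<plusminus>\<sigma>(X) and \<plusminus>\<sigma>(T - e, c) for the end c
  of e in X, with the same sign, so the sum is \<sigma>(X) \<Sum>{\<sigma>(T - e, c) | e \<in> T, c \<in> e \<inter> X}; the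
  remaining edges of T add \<sigma>(T - e, a) + \<sigma>(T - e, b) = 0 or nothing. Exchanging the sums, the
  inner sum becomes \<Sum>{\<sigma>(T - e, c) | e \<in> T, c \<in> e}, which equals p c: the components of T - e
  avoiding c, for the edges e at c, partition V - {c}. Hence the total is \<sigma>(X)^2 = q(F).\<close>

section \<open>Components\<close>

lemma adj_rel_iff [simp]: "(x, y) \<in> adj_rel F \<longleftrightarrow> {x, y} \<in> F"
  by (simp add: adj_rel_def)

lemma rtrancl_adj_rel_sym: "(x, y) \<in> (adj_rel F)\<^sup>* \<Longrightarrow> (y, x) \<in> (adj_rel F)\<^sup>*"
  by (rule symD[OF sym_rtrancl]) (auto simp: sym_def insert_commute)

lemma rtrancl_adj_rel_commute: "(x, y) \<in> (adj_rel F)\<^sup>* \<longleftrightarrow> (y, x) \<in> (adj_rel F)\<^sup>*"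
  by (rule iffI) (erule rtrancl_adj_rel_sym)+

lemma rtrancl_adj_rel_mono: "F \<subseteq> G \<Longrightarrow> (x, y) \<in> (adj_rel F)\<^sup>* \<Longrightarrow> (x, y) \<in> (adj_rel G)\<^sup>*"
  by (rule rtrancl_mono[THEN subsetD]) (auto simp: adj_rel_def)

lemma simple_graph_subset: "simple_graph V E \<Longrightarrow> F \<subseteq> E \<Longrightarrow> simple_graph V F"
  by (auto simp: simple_graph_def)

lemma simple_graph_finite_edges: "simple_graph V E \<Longrightarrow> finite E"
  unfolding simple_graph_def by (meson PowI finite_Pow_iff finite_subset subsetI)

lemma simple_graph_edgeE:
  assumes "simple_graph V E" and "e \<in> E"
  obtains a b where "e = {a, b}" "a \<noteq> b" "a \<in> V" "b \<in> V"
proof -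
  have "e \<subseteq> V" "card e = 2" using assms by (auto simp: simple_graph_def)
  then show thesis using that by (auto simp: card_2_iff)
qed

lemma simple_graph_edge_ends:
  assumes "simple_graph V E" and "{a, b} \<in> E"
  shows "a \<in> V" "b \<in> V" "a \<noteq> b"
  using simple_graph_edgeE[OF assms] by (auto simp: doubleton_eq_iff)

lemma comp_iff: "u \<in> comp V F v \<longleftrightarrow> u \<in> V \<and> (v, u) \<in> (adj_rel F)\<^sup>*"
  by (simp add: comp_def)

lemma comp_self: "v \<in> V \<Longrightarrow> v \<in> comp V F v"
  by (simp add: comp_def)

lemma comp_subset: "comp V F v \<subseteq> V"
  by (auto simp: comp_def)

lemma comp_eq_iff:
  assumes "u \<in> V" "v \<in> V"
  shows "comp V F u = comp V F v \<longleftrightarrow> (u, v) \<in> (adj_rel F)\<^sup>*"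
proof
  assume "comp V F u = comp V F v"
  then show "(u, v) \<in> (adj_rel F)\<^sup>*"
    using comp_self[OF assms(2)] by (auto simp: comp_iff intro: rtrancl_adj_rel_sym)
next
  assume "(u, v) \<in> (adj_rel F)\<^sup>*"
  then show "comp V F u = comp V F v"
    unfolding comp_def by (blast intro: rtrancl_adj_rel_sym rtrancl_trans)
qed

lemma comp_eq_of_mem: "u \<in> comp V F v \<Longrightarrow> comp V F u = comp V F v"
  unfolding comp_def by (blast intro: rtrancl_adj_rel_sym rtrancl_trans)

lemma comp_in_parts: "v \<in> V \<Longrightarrow> comp V F v \<in> parts V F"
  by (simp add: parts_def)

lemma parts_eq_comp: "X \<in> parts V F \<Longrightarrow> v \<in> X \<Longrightarrow> X = comp V F v"
  unfolding parts_def by (auto dest: comp_eq_of_mem)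

lemma parts_subset: "X \<in> parts V F \<Longrightarrow> X \<subseteq> V"
  unfolding parts_def by (auto simp: comp_iff)

lemma finite_parts: "finite V \<Longrightarrow> finite (parts V F)"
  by (simp add: parts_def)

lemma sum_parts:
  assumes "finite V"
  shows "(\<Sum>X\<in>parts V F. sum p X) = sum p V"
proof -
  have "\<Union> (parts V F) = V"
    unfolding parts_def by (auto simp: comp_iff)
  moreover have "\<forall>X\<in>parts V F. finite X"
    using assms by (auto dest: parts_subset intro: finite_subset)
  moreover have "\<forall>X\<in>parts V F. \<forall>Y\<in>parts V F. X \<noteq> Y \<longrightarrow> X \<inter> Y = {}"
    by (auto dest: parts_eq_comp)
  ultimately show ?thesis
    using sum.Union_disjoint[of "parts V F" p] by simp
qed

lemma comp_eq_of_parts_eq: "parts V F = parts V G \<Longrightarrow> v \<in> V \<Longrightarrow> comp V F v = comp V G v"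
  using comp_in_parts[of v V F] comp_self[of v V] parts_eq_comp[of "comp V F v" V G v] by simp

section \<open>Adding an edge\<close>

lemma rtrancl_adj_rel_insert_iff:
  "(x, y) \<in> (adj_rel (insert {a, b} F))\<^sup>* \<longleftrightarrow>
     (x, y) \<in> (adj_rel F)\<^sup>*
     \<or> (x, a) \<in> (adj_rel F)\<^sup>* \<and> (b, y) \<in> (adj_rel F)\<^sup>*
     \<or> (x, b) \<in> (adj_rel F)\<^sup>* \<and> (a, y) \<in> (adj_rel F)\<^sup>*"
  (is "?lhs \<longleftrightarrow> ?rhs")
proof
  assume ?lhs
  then show ?rhs
  proof (induction rule: rtrancl_induct)
    case (step y z)
    then consider "{y, z} \<in> F" | "y = a" "z = b" | "y = b" "z = a"
      by (auto simp: doubleton_eq_iff)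
    then show ?case
    proof cases
      case 1
      then have "(y, z) \<in> adj_rel F" by simp
      then show ?thesis
        using step.IH by (meson rtrancl.rtrancl_into_rtrancl)
    qed (use step.IH in auto)
  qed simp
next
  let ?R = "(adj_rel (insert {a, b} F))\<^sup>*"
  have sub: "(u, v) \<in> ?R" if "(u, v) \<in> (adj_rel F)\<^sup>*" for u v
    using rtrancl_adj_rel_mono[OF subset_insertI that] .
  have "(a, b) \<in> ?R" "(b, a) \<in> ?R"
    by (auto simp: insert_commute)
  then show ?lhs if ?rhs
    using that sub by (meson rtrancl_trans)
qed

lemma comp_insert_edge:
  fixes F :: "'v set set" and a b :: 'v
  assumes "v \<in> V"
  defines "A \<equiv> comp V F a" and "B \<equiv> comp V F b"
  shows "comp V (insert {a, b} F) v = (if v \<in> A \<union> B then A \<union> B else comp V F v)"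
proof -
  have mem: "u \<in> comp V (insert {a, b} F) v \<longleftrightarrow>
      u \<in> comp V F v \<or> v \<in> A \<and> u \<in> B \<or> v \<in> B \<and> u \<in> A" for u
    using assms(1) unfolding A_def B_def comp_iff rtrancl_adj_rel_insert_iff
      rtrancl_adj_rel_commute[of v a] rtrancl_adj_rel_commute[of v b]
    by blast
  show ?thesis
  proof (cases "v \<in> A \<union> B")
    case True
    then have "comp V F v = A \<or> comp V F v = B"
      unfolding A_def B_def using comp_eq_of_mem[of v V F a] comp_eq_of_mem[of v V F b] by blast
    then show ?thesis
      using True mem comp_self[OF assms(1), of F] by (simp add: set_eq_iff) blast
  next
    case False
    then show ?thesis
      using mem by (simp add: set_eq_iff)
  qed
qed

lemma parts_insert_edge:
  fixes F :: "'v set set"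
  assumes "a \<in> V" "b \<in> V"
  defines "A \<equiv> comp V F a" and "B \<equiv> comp V F b"
  shows "parts V (insert {a, b} F) = insert (A \<union> B) (parts V F - {A, B})"
proof -
  have AB: "A \<union> B \<subseteq> V" "a \<in> A \<union> B"
    using assms(1) comp_subset[of V F a] comp_subset[of V F b] comp_self[of a V F]
    unfolding A_def B_def by auto
  have "parts V (insert {a, b} F)
      = (\<lambda>v. comp V (insert {a, b} F) v) ` (A \<union> B) \<union> (\<lambda>v. comp V (insert {a, b} F) v) ` (V - (A \<union> B))"
    unfolding parts_def using AB by blast
  also have "\<dots> = {A \<union> B} \<union> comp V F ` (V - (A \<union> B))"
  proof -
    have "comp V (insert {a, b} F) v = (if v \<in> A \<union> B then A \<union> B else comp V F v)"
      if "v \<in> V" for v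
      using comp_insert_edge[where V = V and F = F and a = a and b = b, OF that]
      unfolding A_def B_def .
    moreover from this[OF assms(1)] have "comp V (insert {a, b} F) a = A \<union> B"
      using AB(2) by simp
    ultimately show ?thesis
      using AB by (auto simp: image_iff)
  qed
  also have "comp V F ` (V - (A \<union> B)) = parts V F - {A, B}"
  proof -
    have "comp V F v \<noteq> A \<and> comp V F v \<noteq> B \<longleftrightarrow> v \<notin> A \<union> B" if "v \<in> V" for v
      using comp_self[OF that, of F] comp_eq_of_mem[of v V F a] comp_eq_of_mem[of v V F b]
      unfolding A_def B_def by auto
    then show ?thesis
      unfolding parts_def by auto
  qed
  finally show ?thesis by simp
qed

lemma parts_insert_connected:
  assumes "a \<in> V" "b \<in> V" "(a, b) \<in> (adj_rel F)\<^sup>*"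
  shows "parts V (insert {a, b} F) = parts V F"
proof -
  have "comp V F a = comp V F b"
    using comp_eq_iff[OF assms(1,2)] assms(3) by simp
  then show ?thesis
    using parts_insert_edge[OF assms(1,2), of F] comp_in_parts[OF assms(1), of F] by auto
qed

lemma card_parts_insert_edge:
  assumes "finite V" "a \<in> V" "b \<in> V" "(a, b) \<notin> (adj_rel F)\<^sup>*"
  shows "card (parts V F) = Suc (card (parts V (insert {a, b} F)))"
proof -
  define A B where "A = comp V F a" and "B = comp V F b"
  have parts: "A \<in> parts V F" "B \<in> parts V F" "A \<noteq> B"
    using assms comp_eq_iff[of a V b F] unfolding A_def B_def by (auto simp: comp_in_parts)
  have "A \<union> B \<notin> parts V F"
  proof
    assume "A \<union> B \<in> parts V F"
    then have "A \<union> B = A"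
      using parts_eq_comp[of "A \<union> B" V F a] comp_self[OF assms(2)] unfolding A_def by auto
    then have "B \<subseteq> A" by blast
    then show False
      using parts parts_eq_comp[OF parts(1), of b] comp_self[OF assms(3)] unfolding B_def by auto
  qed
  then have "card (parts V (insert {a, b} F)) = Suc (card (parts V F - {A, B}))"
    using parts_insert_edge[OF assms(2,3)] finite_parts[OF assms(1)]
    unfolding A_def B_def by simp
  moreover have "card (parts V F - {A, B}) + 2 = card (parts V F)"
    using parts finite_parts[OF assms(1)] card_Diff_subset[of "{A, B}" "parts V F"]
      card_mono[of "parts V F" "{A, B}"] by auto
  ultimately show ?thesis by simp
qed

section \<open>Cycles and forests\<close>

lemma rtrancl_adj_rel_distinct_path:
  assumes "(a, b) \<in> (adj_rel F)\<^sup>*"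
  obtains xs where "distinct (a # xs)" "\<And>i. i < length xs \<Longrightarrow> {(a # xs) ! i, xs ! i} \<in> F"
    "xs = [] \<Longrightarrow> a = b" "xs \<noteq> [] \<Longrightarrow> last xs = b"
proof -
  let ?r = "\<lambda>x y. {x, y} \<in> F"
  have "?r\<^sup>*\<^sup>* a b"
    using assms by (simp add: rtranclp_rtrancl_eq adj_rel_def)
  then obtain ys where "rtrancl_path ?r a ys b"
    by (auto simp: rtranclp_eq_rtrancl_path)
  then obtain xs where xs: "rtrancl_path ?r a xs b" "distinct (a # xs)"
    by (rule rtrancl_path_distinct)
  moreover have "xs = [] \<Longrightarrow> a = b"
    using xs(1) by (auto elim: rtrancl_path.cases)
  ultimately show thesis
    using that rtrancl_path_nth[OF xs(1)] rtrancl_path_last[OF xs(1)] by blast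
qed

lemma has_cycle_mono: "has_cycle F \<Longrightarrow> F \<subseteq> G \<Longrightarrow> has_cycle G"
  unfolding has_cycle_def by blast

lemma has_cycle_insert_connected:
  assumes "(a, b) \<in> (adj_rel F)\<^sup>*" "a \<noteq> b" "{a, b} \<notin> F"
  shows "has_cycle (insert {a, b} F)"
proof -
  obtain xs where xs: "distinct (a # xs)" "\<And>i. i < length xs \<Longrightarrow> {(a # xs) ! i, xs ! i} \<in> F"
    "xs = [] \<Longrightarrow> a = b" "xs \<noteq> [] \<Longrightarrow> last xs = b"
    using rtrancl_adj_rel_distinct_path[OF assms(1)] by blast
  define n where "n = length (a # xs)"
  have "xs \<noteq> []" using xs(3) assms(2) by blast
  have last: "(a # xs) ! (n - 1) = b"
    using xs(4)[OF \<open>xs \<noteq> []\<close>] \<open>xs \<noteq> []\<close> by (simp add: n_def last_conv_nth)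
  have "length xs \<noteq> 1"
  proof
    assume "length xs = 1"
    then have "{a, b} \<in> F"
      using xs(2)[of 0] last by (simp add: n_def)
    then show False using assms(3) by simp
  qed
  moreover have "length xs \<noteq> 0" using \<open>xs \<noteq> []\<close> by simp
  ultimately have "n \<ge> 3" unfolding n_def length_Cons by linarith
  moreover have "{(a # xs) ! i, (a # xs) ! (Suc i mod n)} \<in> insert {a, b} F" if "i < n" for i
  proof (cases "Suc i < n")
    case True
    then show ?thesis using xs(2)[of i] by (simp add: n_def)
  next
    case False
    then have "Suc i = n" using that by simp
    then have "i = n - 1" "Suc i mod n = 0" by auto
    then show ?thesis using last by (auto simp: insert_commute)
  qed
  ultimately show ?thesis
    unfolding has_cycle_def using xs(1) n_def by blast
qed

lemma add_mod_neq_self: "i < n \<Longrightarrow> 0 < k \<Longrightarrow> k < (n::nat) \<Longrightarrow> (i + k) mod n \<noteq> i"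
  by (cases "i + k < n") (auto simp: le_mod_geq)

lemma rtrancl_adj_rel_walk:
  "(\<And>j. j < k \<Longrightarrow> {ws ! j, ws ! Suc j} \<in> F) \<Longrightarrow> (ws ! 0, ws ! k) \<in> (adj_rel F)\<^sup>*"
proof (induction k)
  case (Suc k)
  then have "(ws ! k, ws ! Suc k) \<in> adj_rel F" by simp
  with Suc show ?case by (meson less_Suc_eq rtrancl.rtrancl_into_rtrancl)
qed simp

lemma cycle_edges_inj:
  assumes "distinct vs" "length vs \<ge> 3" "i < length vs" "j < length vs"
    "{vs ! i, vs ! (Suc i mod length vs)} = {vs ! j, vs ! (Suc j mod length vs)}"
  shows "i = j"
proof (rule ccontr)
  assume "i \<noteq> j"
  define n where "n = length vs"
  have "0 < n"
    using assms(2) unfolding n_def by linarith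
  then have "Suc i mod n < n" "Suc j mod n < n"
    by simp_all
  then have "j = Suc i mod n \<and> Suc j mod n = i"
    using nth_eq_iff_index_eq[OF assms(1)] assms(3-5) \<open>i \<noteq> j\<close> unfolding n_def
    by (auto simp: doubleton_eq_iff)
  moreover have "Suc (Suc i mod n) mod n \<noteq> i"
    using add_mod_neq_self[OF assms(3), of 2] assms(2) by (simp add: mod_Suc_eq n_def)
  ultimately show False by metis
qed

lemma not_has_cycle_insert:
  assumes acyclic: "\<not> has_cycle F" and disconnected: "(a, b) \<notin> (adj_rel F)\<^sup>*"
  shows "\<not> has_cycle (insert {a, b} F)"
proof
  assume "has_cycle (insert {a, b} F)"
  then obtain vs where vs: "distinct vs" "length vs \<ge> 3"
    "\<forall>i < length vs. {vs ! i, vs ! (Suc i mod length vs)} \<in> insert {a, b} F"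
    unfolding has_cycle_def by blast
  define n where "n = length vs"
  define edge where "edge i = {vs ! i, vs ! (Suc i mod n)}" for i
  have "0 < n" using vs(2) unfolding n_def by linarith
  obtain i where i: "i < n" "edge i \<notin> F"
    using acyclic vs unfolding has_cycle_def edge_def n_def by blast
  have edge_i: "edge i = {a, b}"
    using vs(3) i unfolding edge_def n_def by auto
  have others: "edge j \<in> F" if "j < n" "j \<noteq> i" for j
    using vs(3) cycle_edges_inj[OF vs(1,2) i(1)[unfolded n_def] that(1)[unfolded n_def]] that edge_i
    unfolding edge_def n_def by auto
  define ws where "ws = rotate (Suc i) vs"
  have ws: "ws ! j = vs ! ((Suc i + j) mod n)" if "j < n" for j
    using that unfolding ws_def n_def by (rule nth_rotate)
  have "{ws ! j, ws ! Suc j} \<in> F" if "j < n - 1" for j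
  proof -
    have "(Suc i + j) mod n \<noteq> i"
      using add_mod_neq_self[OF i(1), of "Suc j"] that by simp
    then have "edge ((Suc i + j) mod n) \<in> F"
      using others \<open>0 < n\<close> by simp
    then show ?thesis
      using that ws[of j] ws[of "Suc j"] unfolding edge_def by (simp add: mod_Suc_eq)
  qed
  then have "(ws ! 0, ws ! (n - 1)) \<in> (adj_rel F)\<^sup>*"
    by (rule rtrancl_adj_rel_walk)
  moreover have "ws ! 0 = vs ! (Suc i mod n)" "ws ! (n - 1) = vs ! i"
    using ws[of 0] ws[of "n - 1"] i(1) by auto
  ultimately have "(vs ! i, vs ! (Suc i mod n)) \<in> (adj_rel F)\<^sup>*"
    by (simp add: rtrancl_adj_rel_commute[of "vs ! i"])
  then show False
    using edge_i disconnected rtrancl_adj_rel_commute[of a b F] unfolding edge_def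
    by (auto simp: doubleton_eq_iff)
qed

lemma parts_empty: "parts V {} = (\<lambda>v. {v}) ` V"
  by (auto simp: parts_def comp_def adj_rel_def)

lemma card_parts_add_card_forest:
  assumes "simple_graph V F" "\<not> has_cycle F"
  shows "card (parts V F) + card F = card V"
  using simple_graph_finite_edges[OF assms(1)] assms
proof (induction F rule: finite_induct)
  case empty
  then show ?case
    by (simp add: parts_empty card_image)
next
  case (insert e F)
  obtain a b where e: "e = {a, b}" "a \<noteq> b" "a \<in> V" "b \<in> V"
    using simple_graph_edgeE[OF insert.prems(1)] by blast
  have "simple_graph V F" "\<not> has_cycle F"
    using simple_graph_subset[OF insert.prems(1)] has_cycle_mono[of F "insert e F"] insert.prems(2)
    by auto
  then have IH: "card (parts V F) + card F = card V"
    by (rule insert.IH)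
  have "(a, b) \<notin> (adj_rel F)\<^sup>*"
    using has_cycle_insert_connected[of a b F] e insert.hyps(2) insert.prems(2) by auto
  then have "card (parts V F) = Suc (card (parts V (insert e F)))"
    using card_parts_insert_edge[of V a b F] insert.prems(1) e by (simp add: simple_graph_def)
  then show ?case
    using IH insert.hyps by simp
qed

section \<open>Spanning trees and 2-forests\<close>

lemma card_parts_spanning_tree_Diff:
  assumes "simple_graph V E" "spanning_tree V E T" "S \<subseteq> T"
  shows "card (parts V (T - S)) = card S + 1"
proof -
  have T: "T \<subseteq> E" "\<not> has_cycle T" "card (parts V T) = 1"
    using assms(2) by (auto simp: spanning_tree_def)
  have "finite T"
    using simple_graph_finite_edges[OF assms(1)] T(1) by (rule finite_subset[rotated])
  have "card (parts V T) + card T = card V"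
    using card_parts_add_card_forest simple_graph_subset[OF assms(1) T(1)] T(2) by blast
  moreover have "card (parts V (T - S)) + card (T - S) = card V"
    using card_parts_add_card_forest simple_graph_subset[OF assms(1), of "T - S"]
      has_cycle_mono[of "T - S" T] T by auto
  moreover have "card (T - S) + card S = card T"
    using card_Diff_subset[OF finite_subset[OF assms(3) \<open>finite T\<close>] assms(3)]
      card_mono[OF \<open>finite T\<close> assms(3)] by simp
  ultimately show ?thesis
    using T(3) by simp
qed

lemma spanning_tree_Diff_edge:
  assumes "simple_graph V E" "spanning_tree V E T" "{a, b} \<in> T"
  shows "spanning_2forest V E (T - {{a, b}})" "(a, b) \<notin> (adj_rel (T - {{a, b}}))\<^sup>*"
proof -
  have T: "T \<subseteq> E" "\<not> has_cycle T" "card (parts V T) = 1"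
    using assms(2) by (auto simp: spanning_tree_def)
  have parts: "card (parts V (T - {{a, b}})) = 2"
    using card_parts_spanning_tree_Diff[OF assms(1,2), of "{{a, b}}"] assms(3) by simp
  then show "spanning_2forest V E (T - {{a, b}})"
    using T has_cycle_mono[of "T - {{a, b}}" T] by (auto simp: spanning_2forest_def)
  have "a \<in> V" "b \<in> V"
    using simple_graph_edge_ends[OF assms(1)] T(1) assms(3) by blast+
  moreover have "insert {a, b} (T - {{a, b}}) = T"
    using assms(3) by blast
  ultimately show "(a, b) \<notin> (adj_rel (T - {{a, b}}))\<^sup>*"
    using parts_insert_connected[of a V b "T - {{a, b}}"] parts T(3) by auto
qed

lemma spanning_tree_insert_iff:
  assumes "simple_graph V E" "spanning_2forest V E F" "{a, b} \<in> E"
  shows "spanning_tree V E (insert {a, b} F) \<longleftrightarrow> (a, b) \<notin> (adj_rel F)\<^sup>*"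
proof -
  have F: "F \<subseteq> E" "\<not> has_cycle F" "card (parts V F) = 2"
    using assms(2) by (auto simp: spanning_2forest_def)
  have ab: "a \<in> V" "b \<in> V"
    using simple_graph_edge_ends[OF assms(1,3)] by blast+
  show ?thesis
  proof
    assume "spanning_tree V E (insert {a, b} F)"
    then show "(a, b) \<notin> (adj_rel F)\<^sup>*"
      using parts_insert_connected[OF ab] F(3) by (auto simp: spanning_tree_def)
  next
    assume "(a, b) \<notin> (adj_rel F)\<^sup>*"
    then show "spanning_tree V E (insert {a, b} F)"
      using card_parts_insert_edge[OF _ ab] not_has_cycle_insert[OF F(2)] F assms(1,3)
      by (auto simp: spanning_tree_def simple_graph_def)
  qed
qed

lemma comp_two_parts:
  assumes "card (parts V F) = 2" "X \<in> parts V F" "v \<in> V"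
  shows "comp V F v = (if v \<in> X then X else V - X)"
proof -
  obtain x y where "parts V F = {x, y}" "x \<noteq> y"
    using assms(1) by (auto simp: card_2_iff)
  moreover define Y where "Y = (if x = X then y else x)"
  ultimately have Y: "parts V F = {X, Y}" "Y \<noteq> X"
    using assms(2) by auto
  have "\<Union> (parts V F) = V"
    unfolding parts_def by (auto simp: comp_iff)
  moreover have "X \<inter> Y = {}"
  proof (rule equals0I)
    fix v
    assume "v \<in> X \<inter> Y"
    then have "X = comp V F v" "Y = comp V F v"
      using Y(1) parts_eq_comp[of _ V F v] by auto
    then show False using Y(2) by simp
  qed
  ultimately have "Y = V - X"
    using Y(1) by auto
  show ?thesis
  proof (cases "v \<in> X")
    case True
    then show ?thesis using parts_eq_comp[OF assms(2)] by simp
  next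
    case False
    have "comp V F v \<in> {X, Y}"
      using comp_in_parts[OF assms(3), of F] Y(1) by simp
    moreover have "comp V F v \<noteq> X"
      using comp_self[OF assms(3)] False by blast
    ultimately show ?thesis
      using False \<open>Y = V - X\<close> by simp
  qed
qed

lemma sum_comp_two_parts:
  fixes p :: "'v \<Rightarrow> 'a::ab_group_add"
  assumes "finite V" "sum p V = 0" "card (parts V F) = 2" "X \<in> parts V F" "v \<in> V"
  shows "sum p (comp V F v) = (if v \<in> X then sum p X else - sum p X)"
  using comp_two_parts[OF assms(3-5)] sum_diff[OF assms(1) parts_subset[OF assms(4)], of p] assms(2)
  by simp

section \<open>A spanning tree identity\<close>

lemma rtrancl_adj_rel_avoiding:
  assumes "(b, a) \<notin> (adj_rel F)\<^sup>*" "(b, u) \<in> (adj_rel F)\<^sup>*"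
  shows "(b, u) \<in> (adj_rel {e \<in> F. a \<notin> e})\<^sup>*"
  using assms(2)
proof (induction rule: rtrancl_induct)
  case (step y z)
  have "(b, z) \<in> (adj_rel F)\<^sup>*"
    using step.hyps by (rule rtrancl_into_rtrancl)
  then have "y \<noteq> a" "z \<noteq> a"
    using assms(1) step.hyps(1) by auto
  then have "(y, z) \<in> adj_rel {e \<in> F. a \<notin> e}"
    using step.hyps(2) by simp
  with step.IH show ?case
    by (rule rtrancl_into_rtrancl)
qed simp

lemma comp_avoiding:
  assumes "(b, a) \<notin> (adj_rel F)\<^sup>*"
  shows "comp V {e \<in> F. a \<notin> e} b = comp V F b"
  using rtrancl_adj_rel_avoiding[OF assms] rtrancl_adj_rel_mono[of "{e \<in> F. a \<notin> e}" F]
  by (auto simp: comp_iff)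

lemma comp_isolated:
  assumes "a \<in> V"
  shows "comp V {e \<in> F. a \<notin> e} a = {a}"
proof -
  have "u = a" if "(a, u) \<in> (adj_rel {e \<in> F. a \<notin> e})\<^sup>*" for u
    using that by (rule converse_rtranclE) auto
  then show ?thesis
    using assms by (auto simp: comp_iff)
qed

lemma simple_graph_edge_atE:
  assumes "simple_graph V E" "e \<in> E" "a \<in> e"
  obtains b where "e = {a, b}" "a \<noteq> b" "a \<in> V" "b \<in> V"
proof -
  obtain x y where "e = {x, y}" "x \<noteq> y" "x \<in> V" "y \<in> V"
    by (rule simple_graph_edgeE[OF assms(1,2)])
  then show thesis
    using that assms(3) by (auto simp: insert_commute)
qed

lemma comp_spanning_tree_Diff_edge_far_end:
  assumes "simple_graph V E" "spanning_tree V E T" "{a, b} \<in> T" "a \<in> V" "b \<in> V"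
  shows "V - comp V (T - {{a, b}}) a = comp V {e \<in> T. a \<notin> e} b"
proof -
  note forest = spanning_tree_Diff_edge[OF assms(1-3)]
  have "comp V (T - {{a, b}}) b = V - comp V (T - {{a, b}}) a"
    using comp_two_parts[of V "T - {{a, b}}" "comp V (T - {{a, b}}) a" b] forest assms(4,5)
    unfolding spanning_2forest_def by (auto simp: comp_in_parts comp_iff)
  moreover have "{e \<in> T - {{a, b}}. a \<notin> e} = {e \<in> T. a \<notin> e}"
    by auto
  ultimately show ?thesis
    using comp_avoiding[of b a "T - {{a, b}}" V] forest(2) rtrancl_adj_rel_commute by metis
qed

lemma inj_on_comp_spanning_tree_Diff_edges_at:
  assumes "simple_graph V E" "spanning_tree V E T"
  shows "inj_on (\<lambda>e. V - comp V (T - {e}) a) {e \<in> T. a \<in> e}"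
proof (rule inj_onI)
  fix e f
  assume ef: "e \<in> {e \<in> T. a \<in> e}" "f \<in> {e \<in> T. a \<in> e}"
    "V - comp V (T - {e}) a = V - comp V (T - {f}) a"
  show "e = f"
  proof (rule ccontr)
    assume "e \<noteq> f"
    have "f \<in> E"
      using assms(2) ef(2) by (auto simp: spanning_tree_def)
    then obtain c where c: "f = {a, c}"
      using simple_graph_edge_atE[OF assms(1)] ef(2) by blast
    have "{a, c} \<in> T - {e}"
      using ef(2) \<open>e \<noteq> f\<close> c by simp
    then have "c \<in> comp V (T - {e}) a"
      using simple_graph_edge_ends[OF assms(1)] assms(2) c \<open>f \<in> E\<close>
      by (auto simp: comp_iff intro: r_into_rtrancl)
    moreover have "comp V (T - {e}) a = comp V (T - {f}) a"
      using ef(3) comp_subset[of V] by (metis double_diff order_refl)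
    ultimately show False
      using spanning_tree_Diff_edge(2)[OF assms(1,2), of a c] ef(2) c by (simp add: comp_iff)
  qed
qed

lemma parts_spanning_tree_Diff_edges_at:
  assumes "simple_graph V E" "spanning_tree V E T" "a \<in> V"
  shows "parts V {e \<in> T. a \<notin> e} = insert {a} ((\<lambda>e. V - comp V (T - {e}) a) ` {e \<in> T. a \<in> e})"
proof (rule card_subset_eq[symmetric])
  have "finite V" "T \<subseteq> E"
    using assms(1,2) by (auto simp: simple_graph_def spanning_tree_def)
  then show "finite (parts V {e \<in> T. a \<notin> e})"
    by (simp add: finite_parts)
  have "V - comp V (T - {e}) a \<in> parts V {e \<in> T. a \<notin> e}" if e: "e \<in> {e \<in> T. a \<in> e}" for e
  proof -
    obtain b where "e = {a, b}" "b \<in> V"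
      using simple_graph_edge_atE[OF assms(1)] \<open>T \<subseteq> E\<close> e by blast
    then show ?thesis
      using comp_spanning_tree_Diff_edge_far_end[OF assms(1,2) _ assms(3)] comp_in_parts e
      by auto
  qed
  then show "insert {a} ((\<lambda>e. V - comp V (T - {e}) a) ` {e \<in> T. a \<in> e}) \<subseteq> parts V {e \<in> T. a \<notin> e}"
    using comp_in_parts[OF assms(3), of "{e \<in> T. a \<notin> e}"] comp_isolated[OF assms(3), of T] by auto
  have "{a} \<notin> (\<lambda>e. V - comp V (T - {e}) a) ` {e \<in> T. a \<in> e}"
    using comp_self[OF assms(3)] by auto
  moreover have "finite {e \<in> T. a \<in> e}"
    using simple_graph_finite_edges[OF assms(1)] \<open>T \<subseteq> E\<close> by (auto intro: finite_subset)
  moreover have "T - {e \<in> T. a \<in> e} = {e \<in> T. a \<notin> e}"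
    by auto
  ultimately show "card (insert {a} ((\<lambda>e. V - comp V (T - {e}) a) ` {e \<in> T. a \<in> e}))
      = card (parts V {e \<in> T. a \<notin> e})"
    using card_parts_spanning_tree_Diff[OF assms(1,2), of "{e \<in> T. a \<in> e}"]
      card_image[OF inj_on_comp_spanning_tree_Diff_edges_at[OF assms(1,2)]] by simp
qed

lemma sum_comp_spanning_tree_Diff_edges_at:
  fixes p :: "'v \<Rightarrow> 'a::ab_group_add"
  assumes "simple_graph V E" "spanning_tree V E T" "a \<in> V" "sum p V = 0"
  shows "(\<Sum>e\<in>{e \<in> T. a \<in> e}. sum p (comp V (T - {e}) a)) = p a"
proof -
  define S where "S = {e \<in> T. a \<in> e}"
  have "finite V" "T \<subseteq> E"
    using assms(1,2) by (auto simp: simple_graph_def spanning_tree_def)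
  then have "finite S"
    using simple_graph_finite_edges[OF assms(1)] unfolding S_def by (auto intro: finite_subset)
  have "{a} \<notin> (\<lambda>e. V - comp V (T - {e}) a) ` S"
    using comp_self[OF assms(3)] by auto
  then have "sum p V = p a + (\<Sum>e\<in>S. sum p (V - comp V (T - {e}) a))"
    using sum_parts[OF \<open>finite V\<close>, where F = "{e \<in> T. a \<notin> e}" and p = p] \<open>finite S\<close>
      sum.reindex[OF inj_on_comp_spanning_tree_Diff_edges_at[OF assms(1,2)], of "sum p"]
    unfolding parts_spanning_tree_Diff_edges_at[OF assms(1-3)] S_def by (simp add: o_def)
  also have "\<dots> = p a - (\<Sum>e\<in>S. sum p (comp V (T - {e}) a))"
    using sum_diff[OF \<open>finite V\<close> comp_subset, of p] assms(4) by (simp add: sum_negf)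
  finally show ?thesis
    using assms(4) unfolding S_def by simp
qed

lemma sum_edges_sum_comp_spanning_tree_Diff:
  fixes p :: "'v \<Rightarrow> 'a::ab_group_add"
  assumes "simple_graph V E" "spanning_tree V E T" "X \<subseteq> V" "sum p V = 0"
  shows "(\<Sum>e\<in>T. \<Sum>a\<in>e \<inter> X. sum p (comp V (T - {e}) a)) = sum p X"
proof -
  have "finite T" "finite X"
    using assms simple_graph_finite_edges[OF assms(1)]
    by (auto simp: spanning_tree_def simple_graph_def intro: finite_subset)
  have "(\<Sum>e\<in>T. \<Sum>a\<in>e \<inter> X. sum p (comp V (T - {e}) a))
      = (\<Sum>e\<in>T. \<Sum>a\<in>{a. a \<in> X \<and> a \<in> e}. sum p (comp V (T - {e}) a))"
    by (simp add: Int_def conj_commute)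
  also have "\<dots> = (\<Sum>a\<in>X. \<Sum>e\<in>{e. e \<in> T \<and> a \<in> e}. sum p (comp V (T - {e}) a))"
    by (rule sum.swap_restrict[OF \<open>finite T\<close> \<open>finite X\<close>])
  also have "\<dots> = sum p X"
    using sum_comp_spanning_tree_Diff_edges_at[OF assms(1,2) _ assms(4)] assms(3)
    by (intro sum.cong) auto
  finally show ?thesis .
qed

lemma connected_iff_same_part:
  assumes "card (parts V F) = 2" "X \<in> parts V F" "a \<in> V" "b \<in> V"
  shows "(a, b) \<in> (adj_rel F)\<^sup>* \<longleftrightarrow> (a \<in> X \<longleftrightarrow> b \<in> X)"
  using comp_eq_iff[OF assms(3,4), of F] comp_two_parts[OF assms(1,2)] assms(3,4) by auto

lemma sum_comp_spanning_tree_Diff_edge_inter_part: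
  fixes p :: "'v \<Rightarrow> real"
  assumes "simple_graph V E" "spanning_2forest V E F" "spanning_tree V E T" "sum p V = 0"
    "X \<in> parts V F" "e \<in> T"
  defines "s \<equiv> (\<Sum>c\<in>e \<inter> X. sum p (comp V (T - {e}) c))"
  shows "spanning_tree V E (insert e F) \<Longrightarrow>
      sum p (comp V F (SOME a. a \<in> e)) * sum p (comp V (T - {e}) (SOME a. a \<in> e)) = sum p X * s"
    and "\<not> spanning_tree V E (insert e F) \<Longrightarrow> s = 0"
proof -
  have "finite V" "T \<subseteq> E" "card (parts V F) = 2"
    using assms(1-3) by (auto simp: simple_graph_def spanning_tree_def spanning_2forest_def)
  obtain a b where e: "e = {a, b}" "a \<noteq> b" "a \<in> V" "b \<in> V"
    using simple_graph_edgeE[OF assms(1)] \<open>T \<subseteq> E\<close> assms(6) by blast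
  note forest = spanning_tree_Diff_edge[OF assms(1,3), of a b, folded e(1), OF assms(6)]
  define Y where "Y = comp V (T - {e}) a"
  have Y: "Y \<in> parts V (T - {e})" "a \<in> Y" "b \<notin> Y"
    using comp_in_parts[OF e(3)] comp_self[OF e(3)] forest(2) e(4)
    unfolding Y_def by (auto simp: comp_iff)
  have sT: "sum p (comp V (T - {e}) c) = (if c \<in> Y then sum p Y else - sum p Y)" if "c \<in> V" for c
    using sum_comp_two_parts[OF \<open>finite V\<close> assms(4) _ Y(1) that] forest(1)
    by (simp add: spanning_2forest_def)
  have sF: "sum p (comp V F c) = (if c \<in> X then sum p X else - sum p X)" if "c \<in> V" for c
    using sum_comp_two_parts[OF \<open>finite V\<close> assms(4) \<open>card (parts V F) = 2\<close> assms(5) that] .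
  have tree_iff: "spanning_tree V E (insert e F) \<longleftrightarrow> (a \<in> X \<longleftrightarrow> b \<notin> X)"
    using spanning_tree_insert_iff[OF assms(1,2)] e(1) \<open>T \<subseteq> E\<close> assms(6)
      connected_iff_same_part[OF \<open>card (parts V F) = 2\<close> assms(5) e(3,4)] by auto
  have s: "s = (if a \<in> X then sum p Y else 0) + (if b \<in> X then - sum p Y else 0)"
    unfolding s_def e(1) using sT e Y(2,3) by (cases "a \<in> X"; cases "b \<in> X") auto
  then show "\<not> spanning_tree V E (insert e F) \<Longrightarrow> s = 0"
    unfolding tree_iff by auto
  have "(SOME c. c \<in> e) \<in> {a, b}"
    unfolding e(1) by (rule someI[of _ a]) simp
  then consider "(SOME c. c \<in> e) = a" | "(SOME c. c \<in> e) = b"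
    by blast
  then show "spanning_tree V E (insert e F) \<Longrightarrow>
      sum p (comp V F (SOME a. a \<in> e)) * sum p (comp V (T - {e}) (SOME a. a \<in> e)) = sum p X * s"
    using sT[OF e(3)] sT[OF e(4)] sF[OF e(3)] sF[OF e(4)] Y(2,3) unfolding tree_iff s
    by cases (cases "a \<in> X"; cases "b \<in> X"; simp)+
qed

lemma sum_spanning_tree_insert_edges_eq_qF:
  fixes p :: "'v \<Rightarrow> real"
  assumes "simple_graph V E" "spanning_2forest V E F" "spanning_tree V E T" "sum p V = 0"
  shows "(\<Sum>e\<in>{e \<in> T. spanning_tree V E (insert e F)}.
            sum p (comp V F (SOME a. a \<in> e)) * sum p (comp V (T - {e}) (SOME a. a \<in> e)))
         = qF V p F"
proof -
  define X where "X = (SOME X. X \<in> parts V F)"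
  have "parts V F \<noteq> {}"
    using assms(2) by (auto simp: spanning_2forest_def)
  then have X: "X \<in> parts V F"
    unfolding X_def by (simp add: some_in_eq)
  have "finite T"
    using assms(3) simple_graph_finite_edges[OF assms(1)]
    by (auto simp: spanning_tree_def intro: finite_subset)
  define s where "s e = (\<Sum>c\<in>e \<inter> X. sum p (comp V (T - {e}) c))" for e
  note edge_term = sum_comp_spanning_tree_Diff_edge_inter_part[OF assms X, folded s_def]
  have "(\<Sum>e\<in>{e \<in> T. spanning_tree V E (insert e F)}.
          sum p (comp V F (SOME a. a \<in> e)) * sum p (comp V (T - {e}) (SOME a. a \<in> e)))
      = sum p X * (\<Sum>e\<in>{e \<in> T. spanning_tree V E (insert e F)}. s e)"
    using edge_term(1) by (simp add: sum_distrib_left)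
  also have "(\<Sum>e\<in>{e \<in> T. spanning_tree V E (insert e F)}. s e) = (\<Sum>e\<in>T. s e)"
    using edge_term(2) \<open>finite T\<close> by (intro sum.mono_neutral_left) auto
  also have "(\<Sum>e\<in>T. s e) = sum p X"
    unfolding s_def
    using sum_edges_sum_comp_spanning_tree_Diff[OF assms(1,3) parts_subset[OF X] assms(4)] .
  finally show ?thesis
    unfolding qF_def X_def by (simp add: power2_eq_square)
qed

section \<open>The bipartite graph\<close>

lemma spanning_tree_not_2forest: "spanning_tree V E T \<Longrightarrow> \<not> spanning_2forest V E T"
  by (simp add: spanning_tree_def spanning_2forest_def)

lemma spanning_2forest_tree_Diff:
  assumes "simple_graph V E" "spanning_tree V E T" "e \<in> T"
  shows "spanning_2forest V E (T - {e})"
proof -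
  have "e \<in> E"
    using assms(2,3) by (auto simp: spanning_tree_def)
  then obtain a b where "e = {a, b}" "a \<noteq> b" "a \<in> V" "b \<in> V"
    by (rule simple_graph_edgeE[OF assms(1)])
  then show ?thesis
    using spanning_tree_Diff_edge(1)[OF assms(1,2)] assms(3) by simp
qed

lemma spanning_tree_insert_parts_eq:
  assumes "simple_graph V E" "spanning_2forest V E F1" "spanning_2forest V E F2"
    "parts V F1 = parts V F2" "e \<in> E" "spanning_tree V E (insert e F1)"
  shows "spanning_tree V E (insert e F2)"
proof -
  obtain a b where e: "e = {a, b}" "a \<in> V" "b \<in> V"
    using simple_graph_edgeE[OF assms(1,5)] by blast
  have "(a, b) \<in> (adj_rel F1)\<^sup>* \<longleftrightarrow> (a, b) \<in> (adj_rel F2)\<^sup>*"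
    using comp_eq_iff[OF e(2,3)] comp_eq_of_parts_eq[OF assms(4)] e(2,3) by metis
  then show ?thesis
    using spanning_tree_insert_iff[OF assms(1)] assms(2,3,5,6) e(1) by auto
qed

lemma gadj12_GV_edgeE:
  assumes "(F1, F2, T) \<in> GV1 V E" "(T1, T2, F) \<in> GV2 V E" "gadj12 E (F1, F2, T) (T1, T2, F)"
  obtains e where "e \<in> T1" "e \<in> T2" "e \<notin> F" "T = insert e F" "F1 = T1 - {e}" "F2 = T2 - {e}"
proof -
  obtain e where e: "T = insert e F" "F1 = T1 - {e}" "F2 = T2 - {e}"
    using assms(3) by (auto simp: gadj12_def)
  have "T1 \<noteq> F1" "T2 \<noteq> F2" "T \<noteq> F"
    using assms(1,2) spanning_tree_not_2forest by (auto simp: GV1_def GV2_def)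
  then show thesis
    using that e by blast
qed

lemma neighbours_GV1:
  assumes "simple_graph V E" "(F1, F2, T) \<in> GV1 V E" "parts V F1 = parts V F2"
  shows "{w \<in> GV2 V E. gadj12 E (F1, F2, T) w}
       = (\<lambda>e. (insert e F1, insert e F2, T - {e})) ` {e \<in> T. spanning_tree V E (insert e F1)}"
proof -
  have u: "spanning_2forest V E F1" "spanning_2forest V E F2" "spanning_tree V E T"
    using assms(2) by (auto simp: GV1_def)
  show ?thesis
  proof (intro set_eqI iffI)
    fix w
    assume w: "w \<in> {w \<in> GV2 V E. gadj12 E (F1, F2, T) w}"
    obtain T1 T2 F where [simp]: "w = (T1, T2, F)"
      by (cases w)
    have "(T1, T2, F) \<in> GV2 V E" "gadj12 E (F1, F2, T) (T1, T2, F)"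
      using w by auto
    then obtain e where e: "e \<in> T1" "e \<in> T2" "e \<notin> F" "T = insert e F" "F1 = T1 - {e}" "F2 = T2 - {e}"
      by (rule gadj12_GV_edgeE[OF assms(2)])
    then have "T1 = insert e F1" "T2 = insert e F2" "F = T - {e}"
      by auto
    moreover have "spanning_tree V E T1"
      using w by (simp add: GV2_def)
    ultimately show "w \<in> (\<lambda>e. (insert e F1, insert e F2, T - {e})) ` {e \<in> T. spanning_tree V E (insert e F1)}"
      using e(4) by auto
  next
    fix w
    assume "w \<in> (\<lambda>e. (insert e F1, insert e F2, T - {e})) ` {e \<in> T. spanning_tree V E (insert e F1)}"
    then obtain e where e: "e \<in> T" "spanning_tree V E (insert e F1)"
      and w: "w = (insert e F1, insert e F2, T - {e})"
      by blast
    have "e \<in> E"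
      using u(3) e(1) by (auto simp: spanning_tree_def)
    have tree2: "spanning_tree V E (insert e F2)"
      using spanning_tree_insert_parts_eq[OF assms(1) u(1,2) assms(3) \<open>e \<in> E\<close> e(2)] .
    have "e \<notin> F1"
      using e(2) u(1) spanning_tree_not_2forest[of V E F1] by (metis insert_absorb)
    have "e \<notin> F2"
      using tree2 u(2) spanning_tree_not_2forest[of V E F2] by (metis insert_absorb)
    have "T = insert e (T - {e})" "F1 = insert e F1 - {e}" "F2 = insert e F2 - {e}"
      using e(1) \<open>e \<notin> F1\<close> \<open>e \<notin> F2\<close> by auto
    then have "gadj12 E (F1, F2, T) w"
      unfolding gadj12_def w prod.case using \<open>e \<in> E\<close> by blast
    then show "w \<in> {w \<in> GV2 V E. gadj12 E (F1, F2, T) w}"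
      using e(2) tree2 spanning_2forest_tree_Diff[OF assms(1) u(3) e(1)] by (simp add: GV2_def w)
  qed
qed

lemma neighbours_GV2:
  assumes "simple_graph V E" "(T1, T2, F) \<in> GV2 V E"
    "\<not> (\<exists>e \<in> (T1 - T2) \<union> (T2 - T1). spanning_tree V E (insert e F))"
  shows "{u \<in> GV1 V E. gadj12 E u (T1, T2, F)}
       = (\<lambda>e. (T1 - {e}, T2 - {e}, insert e F)) ` {e \<in> T1. spanning_tree V E (insert e F)}"
proof -
  have w: "spanning_tree V E T1" "spanning_tree V E T2" "spanning_2forest V E F"
    using assms(2) by (auto simp: GV2_def)
  show ?thesis
  proof (intro set_eqI iffI)
    fix u
    assume u: "u \<in> {u \<in> GV1 V E. gadj12 E u (T1, T2, F)}"
    obtain F1 F2 T where [simp]: "u = (F1, F2, T)"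
      by (cases u)
    have "(F1, F2, T) \<in> GV1 V E" "gadj12 E (F1, F2, T) (T1, T2, F)"
      using u by auto
    then obtain e where e: "e \<in> T1" "e \<in> T2" "e \<notin> F" "T = insert e F" "F1 = T1 - {e}" "F2 = T2 - {e}"
      using assms(2) by (blast elim: gadj12_GV_edgeE)
    moreover have "spanning_tree V E T"
      using u by (simp add: GV1_def)
    ultimately show "u \<in> (\<lambda>e. (T1 - {e}, T2 - {e}, insert e F)) ` {e \<in> T1. spanning_tree V E (insert e F)}"
      by auto
  next
    fix u
    assume "u \<in> (\<lambda>e. (T1 - {e}, T2 - {e}, insert e F)) ` {e \<in> T1. spanning_tree V E (insert e F)}"
    then obtain e where e: "e \<in> T1" "spanning_tree V E (insert e F)"
      and [simp]: "u = (T1 - {e}, T2 - {e}, insert e F)"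
      by blast
    have "e \<in> T2"
      using assms(3) e by blast
    have "e \<in> E"
      using w(1) e(1) by (auto simp: spanning_tree_def)
    then have "gadj12 E u (T1, T2, F)"
      unfolding gadj12_def by auto
    then show "u \<in> {u \<in> GV1 V E. gadj12 E u (T1, T2, F)}"
      using e spanning_2forest_tree_Diff[OF assms(1) w(1) e(1)]
        spanning_2forest_tree_Diff[OF assms(1) w(2) \<open>e \<in> T2\<close>] by (simp add: GV1_def)
  qed
qed

text \<open>The edge of G by which the two triples differ is the unique element of T - F; SOME picks
  one of its ends.\<close>

definition edge_weight :: "'v set \<Rightarrow> ('v \<Rightarrow> real) \<Rightarrow> 'v set set \<times> 'v set set \<times> 'v set set
    \<Rightarrow> 'v set set \<times> 'v set set \<times> 'v set set \<Rightarrow> real" where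
  "edge_weight V p u w = (case u of (F1, _, T) \<Rightarrow> case w of (_, _, F) \<Rightarrow>
     let a = SOME a. a \<in> \<Union> (T - F) in sum p (comp V F1 a) * sum p (comp V F a))"

lemma sum_edge_weight_GV1:
  assumes "simple_graph V E" "sum p V = 0" "u \<in> GV1 V E" "\<not> special V E (Inl u)"
  shows "(\<Sum>w\<in>{w \<in> GV2 V E. gadj12 E u w}. edge_weight V p u w) = qG V p (Inl u)"
proof -
  obtain F1 F2 T where u: "u = (F1, F2, T)"
    by (cases u)
  have parts: "parts V F1 = parts V F2"
    using assms(4) by (simp add: special_def u)
  have forest: "spanning_2forest V E F1" and tree: "spanning_tree V E T"
    using assms(3) by (auto simp: GV1_def u)
  have "inj_on (\<lambda>e. (insert e F1, insert e F2, T - {e})) T"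
    by (rule inj_onI) blast
  then have "(\<Sum>w\<in>{w \<in> GV2 V E. gadj12 E u w}. edge_weight V p u w)
      = (\<Sum>e\<in>{e \<in> T. spanning_tree V E (insert e F1)}.
           edge_weight V p u (insert e F1, insert e F2, T - {e}))"
    unfolding u neighbours_GV1[OF assms(1) assms(3)[unfolded u] parts]
    by (subst sum.reindex) (auto intro: inj_on_subset)
  also have "\<dots> = (\<Sum>e\<in>{e \<in> T. spanning_tree V E (insert e F1)}.
      sum p (comp V F1 (SOME a. a \<in> e)) * sum p (comp V (T - {e}) (SOME a. a \<in> e)))"
  proof (rule sum.cong)
    fix e
    assume "e \<in> {e \<in> T. spanning_tree V E (insert e F1)}"
    then have "T - (T - {e}) = {e}"
      by auto
    then show "edge_weight V p u (insert e F1, insert e F2, T - {e})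
        = sum p (comp V F1 (SOME a. a \<in> e)) * sum p (comp V (T - {e}) (SOME a. a \<in> e))"
      by (simp add: edge_weight_def u)
  qed simp
  also have "\<dots> = qG V p (Inl u)"
    using sum_spanning_tree_insert_edges_eq_qF[OF assms(1) forest tree assms(2)]
    by (simp add: qG_def u)
  finally show ?thesis .
qed

lemma sum_edge_weight_GV2:
  assumes "simple_graph V E" "sum p V = 0" "w \<in> GV2 V E" "\<not> special V E (Inr w)"
  shows "(\<Sum>u\<in>{u \<in> GV1 V E. gadj12 E u w}. edge_weight V p u w) = qG V p (Inr w)"
proof -
  obtain T1 T2 F where w: "w = (T1, T2, F)"
    by (cases w)
  have nonspecial: "\<not> (\<exists>e \<in> (T1 - T2) \<union> (T2 - T1). spanning_tree V E (insert e F))"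
    using assms(4) by (simp add: special_def w)
  have tree: "spanning_tree V E T1" and forest: "spanning_2forest V E F"
    using assms(3) by (auto simp: GV2_def w)
  have "inj_on (\<lambda>e. (T1 - {e}, T2 - {e}, insert e F)) T1"
    by (rule inj_onI) blast
  then have "(\<Sum>u\<in>{u \<in> GV1 V E. gadj12 E u w}. edge_weight V p u w)
      = (\<Sum>e\<in>{e \<in> T1. spanning_tree V E (insert e F)}.
           edge_weight V p (T1 - {e}, T2 - {e}, insert e F) w)"
    unfolding w neighbours_GV2[OF assms(1) assms(3)[unfolded w] nonspecial]
    by (subst sum.reindex) (auto intro: inj_on_subset)
  also have "\<dots> = (\<Sum>e\<in>{e \<in> T1. spanning_tree V E (insert e F)}.
      sum p (comp V F (SOME a. a \<in> e)) * sum p (comp V (T1 - {e}) (SOME a. a \<in> e)))"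
  proof (rule sum.cong)
    fix e
    assume "e \<in> {e \<in> T1. spanning_tree V E (insert e F)}"
    then have "e \<notin> F"
      using forest spanning_tree_not_2forest[of V E F] by (metis mem_Collect_eq insert_absorb)
    then have "insert e F - F = {e}"
      by auto
    then show "edge_weight V p (T1 - {e}, T2 - {e}, insert e F) w
        = sum p (comp V F (SOME a. a \<in> e)) * sum p (comp V (T1 - {e}) (SOME a. a \<in> e))"
      by (simp add: edge_weight_def w mult.commute)
  qed simp
  also have "\<dots> = qG V p (Inr w)"
    using sum_spanning_tree_insert_edges_eq_qF[OF assms(1) forest tree assms(2)]
    by (simp add: qG_def w)
  finally show ?thesis .
qed

lemma finite_GV1: "simple_graph V E \<Longrightarrow> finite (GV1 V E)"
  by (rule finite_subset[of _ "Pow E \<times> Pow E \<times> Pow E"])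
    (auto simp: GV1_def spanning_tree_def spanning_2forest_def simple_graph_finite_edges)

lemma finite_GV2: "simple_graph V E \<Longrightarrow> finite (GV2 V E)"
  by (rule finite_subset[of _ "Pow E \<times> Pow E \<times> Pow E"])
    (auto simp: GV2_def spanning_tree_def spanning_2forest_def simple_graph_finite_edges)

lemma sum_edge_weight_Gcomp_Inl:
  assumes "simple_graph V E" "sum p V = 0" "Inl u \<in> Gcomp V E x"
    "\<forall>y \<in> Gcomp V E x. \<not> special V E y"
  shows "(\<Sum>w\<in>{w. Inr w \<in> Gcomp V E x \<and> gadj12 E u w}. edge_weight V p u w) = qG V p (Inl u)"
proof -
  have "u \<in> GV1 V E" "(x, Inl u) \<in> (GEdges V E)\<^sup>*"
    using assms(3) by (auto simp: Gcomp_def GVerts_def)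
  moreover have "(Inl u, Inr w) \<in> GEdges V E" if "w \<in> GV2 V E" "gadj12 E u w" for w
    using \<open>u \<in> GV1 V E\<close> that unfolding GEdges_def by blast
  ultimately have "(x, Inr w) \<in> (GEdges V E)\<^sup>*" if "w \<in> GV2 V E" "gadj12 E u w" for w
    using that by (meson rtrancl_into_rtrancl)
  then have "{w. Inr w \<in> Gcomp V E x \<and> gadj12 E u w} = {w \<in> GV2 V E. gadj12 E u w}"
    by (auto simp: Gcomp_def GVerts_def)
  then show ?thesis
    using sum_edge_weight_GV1[OF assms(1,2) \<open>u \<in> GV1 V E\<close>] assms(3,4) by simp
qed

lemma sum_edge_weight_Gcomp_Inr:
  assumes "simple_graph V E" "sum p V = 0" "Inr w \<in> Gcomp V E x"
    "\<forall>y \<in> Gcomp V E x. \<not> special V E y"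
  shows "(\<Sum>u\<in>{u. Inl u \<in> Gcomp V E x \<and> gadj12 E u w}. edge_weight V p u w) = qG V p (Inr w)"
proof -
  have "w \<in> GV2 V E" "(x, Inr w) \<in> (GEdges V E)\<^sup>*"
    using assms(3) by (auto simp: Gcomp_def GVerts_def)
  moreover have "(Inr w, Inl u) \<in> GEdges V E" if "u \<in> GV1 V E" "gadj12 E u w" for u
    using \<open>w \<in> GV2 V E\<close> that unfolding GEdges_def by blast
  ultimately have "(x, Inl u) \<in> (GEdges V E)\<^sup>*" if "u \<in> GV1 V E" "gadj12 E u w" for u
    using that by (meson rtrancl_into_rtrancl)
  then have "{u. Inl u \<in> Gcomp V E x \<and> gadj12 E u w} = {u \<in> GV1 V E. gadj12 E u w}"
    by (auto simp: Gcomp_def GVerts_def)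
  then show ?thesis
    using sum_edge_weight_GV2[OF assms(1,2) \<open>w \<in> GV2 V E\<close>] assms(3,4) by simp
qed

theorem proposition3p11:
  fixes V :: "'v set" and E :: "'v set set" and p :: "'v \<Rightarrow> real" and x :: "'v gvert"
  assumes "simple_graph V E"
    and "connected_graph V E"
    and "(\<Sum>v\<in>V. p v) = 0"
    and "x \<in> GVerts V E"
    and "\<forall>y \<in> Gcomp V E x. \<not> special V E y"
  shows "(\<Sum>u\<in>{u. Inl u \<in> Gcomp V E x}. qG V p (Inl u))
       = (\<Sum>w\<in>{w. Inr w \<in> Gcomp V E x}. qG V p (Inr w))"
proof -
  define C1 C2 where "C1 = {u. Inl u \<in> Gcomp V E x}" and "C2 = {w. Inr w \<in> Gcomp V E x}"
  have "C1 \<subseteq> GV1 V E" "C2 \<subseteq> GV2 V E"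
    by (auto simp: C1_def C2_def Gcomp_def GVerts_def)
  then have "finite C1" "finite C2"
    using finite_GV1[OF assms(1)] finite_GV2[OF assms(1)] by (auto intro: finite_subset)
  have "(\<Sum>u\<in>C1. qG V p (Inl u)) = (\<Sum>u\<in>C1. \<Sum>w\<in>{w. w \<in> C2 \<and> gadj12 E u w}. edge_weight V p u w)"
    using sum_edge_weight_Gcomp_Inl[OF assms(1,3) _ assms(5)] by (simp add: C1_def C2_def)
  also have "\<dots> = (\<Sum>w\<in>C2. \<Sum>u\<in>{u. u \<in> C1 \<and> gadj12 E u w}. edge_weight V p u w)"
    by (rule sum.swap_restrict[OF \<open>finite C1\<close> \<open>finite C2\<close>])
  also have "\<dots> = (\<Sum>w\<in>C2. qG V p (Inr w))"
    using sum_edge_weight_Gcomp_Inr[OF assms(1,3) _ assms(5)] by (simp add: C1_def C2_def)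
  finally show ?thesis
    unfolding C1_def C2_def .
qed

end
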